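(* Let $A,B$ be $n\times n$ complex matrices. Then \[ \|A+B\|_F\le \sqrt{\frac{1+\sqrt{2}}{2}}\,\big\||A|+|B|\big\|_F . \]
   Context: For an $n\times n$ complex matrix $A$, $|A|:=(A^*A)^{1/2}$ denotes the operator absolute value (positive semidefinite square root), where $A^*$ is the conjugate transpose. $\|A\|_F=(\operatorname{tr}|A|^2)^{1/2}=(\operatorname{tr}A^*A)^{1/2}$ is the Frobenius norm. *)

theory Defs
  imports "HOL-Analysis.Analysis"
begin

definition cadj :: "complex^'n^'n \<Rightarrow> complex^'n^'n" where
  "cadj A = (\<chi> i j. cnj (A $ j $ i))"

definition hermitian_mat :: "complex^'n^'n \<Rightarrow> bool" where
  "hermitian_mat P \<longleftrightarrow> cadj P = P"

definition psd_mat :: "complex^'n^'n \<Rightarrow> bool" where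
  "psd_mat P \<longleftrightarrow> hermitian_mat P \<and>
     (\<forall>x :: complex^'n. 0 \<le> Re (\<Sum>i\<in>UNIV. \<Sum>j\<in>UNIV. cnj (x $ i) * P $ i $ j * x $ j))"

definition mabs :: "complex^'n^'n \<Rightarrow> complex^'n^'n" where
  "mabs A = (THE P. psd_mat P \<and> P ** P = cadj A ** A)"

definition frob_norm :: "complex^'n^'n \<Rightarrow> real" where
  "frob_norm A = sqrt (Re (trace (cadj A ** A)))"

end

theory Submission
  imports Defs
begin

text \<open>
  Diagonalise |A| = U diag(d) U* and |B| = V diag(e) V*. The columns x_i of AU and y_j of BV are
  orthogonal with norms d_i and e_j, and with W = V* U one has
    tr (A* B) = sum_ij <x_i, y_j> W_ji   and   tr (|A| |B|) = sum_ij d_i e_j |W_ji|^2.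
  By AM-GM, for any c > 0 each term of the first sum is at most
    c d_i e_j |W_ji|^2 + |<x_i, y_j>|^2 (1/d_i^2 + 1/e_j^2) / (8c),
  and Bessel's inequality bounds the sums of the last terms by ||A||^2 + ||B||^2, whence
    Re tr (A* B) <= (||A||^2 + ||B||^2) / (8c) + c tr (|A| |B|).
  Expanding ||A + B||^2 and |||A| + |B|||^2 gives the claim for the c with 1 + 1/(4c) = c,
  namely c = (1 + sqrt 2) / 2.
\<close>

section \<open>Adjoints, the complex inner product and diagonal matrices\<close>

lemma cadj_nth [simp]: "cadj A $ i $ j = cnj (A $ j $ i)"
  by (simp add: cadj_def)

lemma cadj_cadj [simp]: "cadj (cadj A) = A"
  by (simp add: vec_eq_iff)

lemma cadj_add [simp]: "cadj (A + B) = cadj A + cadj B"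
  by (simp add: vec_eq_iff)

lemma cadj_diff [simp]: "cadj (A - B) = cadj A - cadj B"
  by (simp add: vec_eq_iff)

lemma cadj_mat [simp]: "cadj (mat 1) = mat 1"
  by (simp add: vec_eq_iff mat_def)

lemma cadj_mult: "cadj (A ** B) = cadj B ** cadj A"
  by (simp add: vec_eq_iff matrix_matrix_mult_def mult.commute)

lemma trace_cadj: "trace (cadj A) = cnj (trace A)"
  by (simp add: trace_def)

lemma matrix_mul_zero_right [simp]: "(A :: 'a::semiring_1^'n^'m) ** 0 = 0"
  by (simp add: matrix_matrix_mult_def vec_eq_iff)

lemma matrix_mul_diff_ldistrib: "(A :: 'a::comm_ring_1^'n^'m) ** (B - C) = A ** B - A ** C"
  by (simp add: matrix_matrix_mult_def vec_eq_iff right_diff_distrib sum_subtractf)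

lemma matrix_mul_diff_rdistrib: "((A :: 'a::comm_ring_1^'n^'m) - B) ** C = A ** C - B ** C"
  by (simp add: matrix_matrix_mult_def vec_eq_iff left_diff_distrib sum_subtractf)

lemma matrix_mul_add_rdistrib: "((A :: 'a::comm_semiring_1^'n^'m) + B) ** C = A ** C + B ** C"
  by (simp add: matrix_matrix_mult_def vec_eq_iff distrib_right sum.distrib)

lemma trace_cadj_mult_swap: "trace (cadj B ** A) = cnj (trace (cadj A ** B))"
  by (metis cadj_cadj cadj_mult trace_cadj)

definition cinner :: "complex^'n \<Rightarrow> complex^'n \<Rightarrow> complex" where
  "cinner x y = (\<Sum>i\<in>UNIV. cnj (x $ i) * y $ i)"

lemma cinner_add_right: "cinner x (y + z) = cinner x y + cinner x z"
  by (simp add: cinner_def distrib_left sum.distrib)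

lemma cinner_add_left: "cinner (x + y) z = cinner x z + cinner y z"
  by (simp add: cinner_def distrib_right sum.distrib)

lemma cinner_diff_right: "cinner x (y - z) = cinner x y - cinner x z"
  by (simp add: cinner_def right_diff_distrib sum_subtractf)

lemma cinner_zero_right [simp]: "cinner x 0 = 0"
  by (simp add: cinner_def)

lemma cinner_scale_right: "cinner x (c *s y) = c * cinner x y"
  by (simp add: cinner_def sum_distrib_left mult.left_commute)

lemma cinner_scale_left: "cinner (c *s x) y = cnj c * cinner x y"
  by (simp add: cinner_def sum_distrib_left mult.assoc)

lemma cinner_commute: "cinner y x = cnj (cinner x y)"
  by (simp add: cinner_def mult.commute)

lemma cinner_eq_0_commute: "cinner y x = 0 \<longleftrightarrow> cinner x y = 0"
  by (metis cinner_commute complex_cnj_zero_iff)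

lemma Re_cinner: "Re (cinner x y) = x \<bullet> y"
  by (simp add: cinner_def inner_vec_def inner_complex_def)

lemma cinner_self: "cinner x x = of_real ((norm x)\<^sup>2)"
  by (simp add: complex_eq_iff Re_cinner power2_norm_eq_inner) (simp add: cinner_def)

lemma cinner_adjoint: "cinner x (H *v y) = cinner (cadj H *v x) y"
proof -
  have "cinner x (H *v y) = (\<Sum>i\<in>UNIV. \<Sum>j\<in>UNIV. cnj (x $ i) * H $ i $ j * y $ j)"
    by (simp add: cinner_def matrix_vector_mult_def sum_distrib_left mult.assoc)
  also have "\<dots> = (\<Sum>j\<in>UNIV. \<Sum>i\<in>UNIV. cnj (x $ i) * H $ i $ j * y $ j)"
    by (rule sum.swap)
  also have "\<dots> = cinner (cadj H *v x) y"
    by (simp add: cinner_def matrix_vector_mult_def sum_distrib_left sum_distrib_right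
        mult.commute mult.left_commute)
  finally show ?thesis .
qed

lemma cinner_hermitian: "hermitian_mat H \<Longrightarrow> cinner x (H *v y) = cinner (H *v x) y"
  by (simp add: cinner_adjoint hermitian_mat_def)

lemma Im_cinner_hermitian: "hermitian_mat H \<Longrightarrow> Im (cinner x (H *v x)) = 0"
  using cinner_hermitian[of H x x] cinner_commute[of x "H *v x"]
  by (metis cnj.simps(2) complex.sel(2) equation_minus_iff neg_equal_zero)

lemma psd_mat_iff: "psd_mat P \<longleftrightarrow> hermitian_mat P \<and> (\<forall>x. 0 \<le> Re (cinner x (P *v x)))"
  by (simp add: psd_mat_def cinner_def matrix_vector_mult_def sum_distrib_left mult.assoc)

definition unitary_mat :: "complex^'n^'n \<Rightarrow> bool" where
  "unitary_mat U \<longleftrightarrow> cadj U ** U = mat 1"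

lemma unitary_matD: "unitary_mat U \<Longrightarrow> cadj U ** U = mat 1"
  by (simp add: unitary_mat_def)

lemma unitary_mat_right: "unitary_mat U \<Longrightarrow> U ** cadj U = mat 1"
  unfolding unitary_mat_def using matrix_left_right_inverse by blast

lemma unitary_mat_cancel_left: "unitary_mat U \<Longrightarrow> cadj U ** (U ** A) = A"
  by (simp add: unitary_matD matrix_mul_assoc)

lemma trace_unitary_conj: "unitary_mat U \<Longrightarrow> trace (cadj U ** M ** U) = trace M"
  using trace_mul_sym[of "cadj U ** M" U] unitary_mat_right[of U]
  by (simp add: matrix_mul_assoc)

definition diag_mat :: "('n \<Rightarrow> real) \<Rightarrow> complex^'n^'n" where
  "diag_mat d = (\<chi> i j. if i = j then of_real (d i) else 0)"

lemma diag_mat_nth: "diag_mat d $ i $ j = (if i = j then of_real (d i) else 0)"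
  by (simp add: diag_mat_def)

lemma cadj_diag_mat [simp]: "cadj (diag_mat d) = diag_mat d"
  by (simp add: diag_mat_def vec_eq_iff)

lemma matrix_mul_diag_mat_nth: "(A ** diag_mat d) $ i $ j = A $ i $ j * of_real (d j)"
proof -
  have "(A ** diag_mat d) $ i $ j = (\<Sum>k\<in>UNIV. if k = j then A $ i $ k * of_real (d j) else 0)"
    unfolding diag_mat_def matrix_matrix_mult_def vec_lambda_beta by (intro sum.cong) auto
  then show ?thesis by simp
qed

lemma diag_mat_mul_nth: "(diag_mat d ** A) $ i $ j = of_real (d i) * A $ i $ j"
proof -
  have "(diag_mat d ** A) $ i $ j = (\<Sum>k\<in>UNIV. if k = i then of_real (d i) * A $ k $ j else 0)"
    unfolding diag_mat_def matrix_matrix_mult_def vec_lambda_beta by (intro sum.cong) auto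
  then show ?thesis by simp
qed

lemma diag_mat_mult: "diag_mat f ** diag_mat g = diag_mat (\<lambda>i. f i * g i)"
  by (simp add: vec_eq_iff matrix_mul_diag_mat_nth diag_mat_nth)

lemma diag_mat_mult_vec_nth: "(diag_mat d *v x) $ i = of_real (d i) * x $ i"
proof -
  have "(diag_mat d *v x) $ i = (\<Sum>j\<in>UNIV. if j = i then of_real (d i) * x $ j else 0)"
    unfolding diag_mat_def matrix_vector_mult_def vec_lambda_beta by (intro sum.cong) auto
  then show ?thesis by simp
qed

lemma Re_trace_diag_mat: "Re (trace (diag_mat d)) = (\<Sum>i\<in>UNIV. d i)"
  by (simp add: trace_def diag_mat_nth)

lemma gram_diag_nth: "(cadj X ** X) $ i $ i = of_real (\<Sum>k\<in>UNIV. (cmod (X $ k $ i))\<^sup>2)"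
  by (simp add: matrix_matrix_mult_def complex_norm_square mult.commute del: of_real_power)

lemma trace_gram: "trace (cadj X ** X) = of_real (\<Sum>i\<in>UNIV. \<Sum>k\<in>UNIV. (cmod (X $ k $ i))\<^sup>2)"
  by (simp add: trace_def gram_diag_nth)

lemma Re_trace_gram_nonneg: "0 \<le> Re (trace (cadj X ** X))"
  by (simp add: trace_gram sum_nonneg)

lemma Re_trace_gram_eq_0_iff: "Re (trace (cadj X ** X)) = 0 \<longleftrightarrow> X = 0"
  by (auto simp: trace_gram sum_nonneg_eq_0_iff sum_nonneg vec_eq_iff)

section \<open>The spectral theorem for Hermitian matrices\<close>

lemma scaleR_eq_scale: "r *\<^sub>R (x :: complex^'n) = of_real r *s x"
  by (simp add: vec_eq_iff scaleR_conv_of_real[where 'a=complex])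

lemma orthogonal_complement_nonzero:
  fixes E :: "(complex^'n) set"
  assumes "finite E" and "card E < CARD('n)"
  obtains z where "z \<noteq> 0" and "\<forall>e\<in>E. cinner e z = 0"
proof -
  define F where "F = E \<union> (\<lambda>e. \<i> *s e) ` E"
  have "finite F"
    using assms(1) by (simp add: F_def)
  moreover have "card F \<le> 2 * card E"
    using card_Un_le[of E "(\<lambda>e. \<i> *s e) ` E"] card_image_le[OF assms(1), of "\<lambda>e. \<i> *s e"]
    unfolding F_def by linarith
  ultimately have "dim F < DIM(complex^'n)"
    using assms(2) dim_le_card[of F F] span_superset by fastforce
  then obtain z where "z \<noteq> 0" and z: "\<And>y. y \<in> span F \<Longrightarrow> orthogonal z y"
    using orthogonal_to_subspace_exists by blast
  \<comment> \<open>Orthogonality to \<open>e\<close> and \<open>\<i> e\<close> in the real inner product kills the real and the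
      imaginary part of the complex one.\<close>
  have "cinner e z = 0" if "e \<in> E" for e
  proof -
    have "e \<in> span F" and "\<i> *s e \<in> span F"
      using that by (auto simp: F_def intro: span_base)
    then have "z \<bullet> e = 0" and "z \<bullet> (\<i> *s e) = 0"
      using z by (auto simp: orthogonal_def)
    then have "Re (cinner e z) = 0" and "Re (cinner (\<i> *s e) z) = 0"
      by (simp_all add: Re_cinner inner_commute)
    then show ?thesis
      by (simp add: cinner_scale_left complex_eq_iff)
  qed
  with \<open>z \<noteq> 0\<close> show ?thesis
    using that by blast
qed

lemma hermitian_form_add_scaleR:
  assumes "hermitian_mat H"
  shows "Re (cinner (x + t *\<^sub>R y) (H *v (x + t *\<^sub>R y))) =
    Re (cinner x (H *v x)) + 2 * t * Re (cinner y (H *v x)) + t\<^sup>2 * Re (cinner y (H *v y))"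
proof -
  have "cinner x (H *v y) = cnj (cinner y (H *v x))"
    using assms by (metis cinner_commute cinner_hermitian)
  then show ?thesis
    by (simp add: scaleR_eq_scale matrix_vector_right_distrib vector_scalar_commute
        cinner_add_left cinner_add_right cinner_scale_left cinner_scale_right
        power2_eq_square algebra_simps)
qed

lemma quadratic_nonpos_imp_linear_coeff_zero:
  fixes a b :: real
  assumes "\<And>t. t * a + t\<^sup>2 * b \<le> 0"
  shows "a = 0"
proof (rule ccontr)
  assume "a \<noteq> 0"
  define s where "s = 1 / (\<bar>b\<bar> + 1)"
  have "s > 0" and "s * \<bar>b\<bar> < 1"
    by (simp_all add: s_def add_pos_nonneg divide_less_eq)
  then have "\<bar>s * b\<bar> < 1"
    by (simp add: abs_mult)
  with \<open>s > 0\<close> have "s * (1 + s * b) > 0"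
    by (simp add: abs_less_iff)
  with \<open>a \<noteq> 0\<close> have "a\<^sup>2 * (s * (1 + s * b)) > 0"
    by simp
  moreover have "(s * a) * a + (s * a)\<^sup>2 * b = a\<^sup>2 * (s * (1 + s * b))"
    by (simp add: power2_eq_square algebra_simps)
  ultimately show False
    using assms[of "s * a"] by simp
qed

lemma rayleigh_maximizer_eigenvector:
  fixes H :: "complex^'n^'n"
  assumes herm: "hermitian_mat H" and S: "vec.subspace S" and inv: "\<And>y. y \<in> S \<Longrightarrow> H *v y \<in> S"
    and x: "x \<in> S" "norm x = 1"
    and max: "\<And>y. y \<in> S \<Longrightarrow> norm y = 1 \<Longrightarrow> Re (cinner y (H *v y)) \<le> Re (cinner x (H *v x))"
  shows "H *v x = cinner x (H *v x) *s x"
proof -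
  define lam where "lam = Re (cinner x (H *v x))"
  have bound: "Re (cinner v (H *v v)) \<le> lam * (norm v)\<^sup>2" if "v \<in> S" for v
  proof (cases "v = 0")
    case False
    define u where "u = (1 / norm v) *\<^sub>R v"
    have "u \<in> S"
      using S that by (simp add: u_def scaleR_eq_scale vec.subspace_scale)
    moreover have "norm u = 1"
      using False by (simp add: u_def)
    ultimately have "Re (cinner u (H *v u)) \<le> lam"
      by (simp add: max lam_def)
    moreover have "Re (cinner u (H *v u)) = Re (cinner v (H *v v)) / (norm v)\<^sup>2"
      by (simp add: u_def scaleR_eq_scale vector_scalar_commute cinner_scale_left
          cinner_scale_right power2_eq_square)
    ultimately show ?thesis
      using False by (simp add: divide_le_eq)
  qed (simp add: cinner_def)
  have first_order: "Re (cinner y (H *v x)) = 0" if "y \<in> S" "cinner x y = 0" for y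
  proof -
    have "t * (2 * Re (cinner y (H *v x))) + t\<^sup>2 * (Re (cinner y (H *v y)) - lam * (norm y)\<^sup>2) \<le> 0"
      for t
    proof -
      have "x + t *\<^sub>R y \<in> S"
        using S x that by (simp add: scaleR_eq_scale vec.subspace_add vec.subspace_scale)
      moreover have "(norm (x + t *\<^sub>R y))\<^sup>2 = 1 + t\<^sup>2 * (norm y)\<^sup>2"
      proof -
        have "x \<bullet> x = 1" and "x \<bullet> y = 0"
          using x that Re_cinner[of x y] by (simp_all flip: power2_norm_eq_inner)
        then show ?thesis
          unfolding power2_norm_eq_inner
          by (simp add: inner_add_left inner_add_right inner_commute algebra_simps power2_eq_square)
      qed
      ultimately show ?thesis
        using bound[of "x + t *\<^sub>R y"] hermitian_form_add_scaleR[OF herm, of x t y]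
        by (simp add: lam_def algebra_simps)
    qed
    then show ?thesis
      using quadratic_nonpos_imp_linear_coeff_zero by fastforce
  qed
  have orth: "cinner y (H *v x) = 0" if "y \<in> S" "cinner x y = 0" for y
  proof -
    have "Re (cinner (\<i> *s y) (H *v x)) = 0"
      using that by (intro first_order) (simp_all add: S vec.subspace_scale cinner_scale_right)
    then show ?thesis
      using first_order[OF that] by (simp add: cinner_scale_left complex_eq_iff)
  qed
  define w where "w = H *v x - cinner x (H *v x) *s x"
  have xx: "cinner x x = 1"
    using x by (simp add: cinner_self)
  have "w \<in> S"
    using S x inv by (simp add: w_def vec.subspace_diff vec.subspace_scale)
  moreover have "cinner x w = 0"
    by (simp add: w_def cinner_diff_right cinner_scale_right xx)
  ultimately have "cinner w (H *v x) = 0" and "cinner w x = 0"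
    using orth cinner_eq_0_commute by blast+
  then have "cinner w w = 0"
    by (simp add: w_def[of] cinner_diff_right cinner_scale_right)
  then show ?thesis
    by (simp add: cinner_self w_def)
qed

lemma hermitian_eigenvector_orthogonal:
  fixes H :: "complex^'n^'n" and E :: "(complex^'n) set"
  assumes herm: "hermitian_mat H" and "finite E" and "card E < CARD('n)"
    and eig: "\<forall>e\<in>E. \<exists>\<mu>. H *v e = \<mu> *s e"
  obtains x \<mu> where "norm x = 1" and "\<forall>e\<in>E. cinner e x = 0" and "H *v x = \<mu> *s x"
proof -
  define S where "S = {x. \<forall>e\<in>E. cinner e x = 0}"
  have S: "vec.subspace S"
    by (simp add: S_def vec.subspace_def cinner_add_right cinner_scale_right)
  have inv: "H *v y \<in> S" if "y \<in> S" for y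
  proof -
    have "cinner e (H *v y) = 0" if "e \<in> E" for e
    proof -
      obtain \<mu> where "H *v e = \<mu> *s e"
        using eig \<open>e \<in> E\<close> by blast
      then have "cinner e (H *v y) = cnj \<mu> * cinner e y"
        using cinner_hermitian[OF herm] by (simp add: cinner_scale_left)
      with \<open>y \<in> S\<close> \<open>e \<in> E\<close> show ?thesis
        by (simp add: S_def)
    qed
    then show ?thesis
      by (simp add: S_def)
  qed
  have "closed S"
  proof -
    have "S = (\<Inter>e\<in>E. {x. cinner e x = 0})"
      by (auto simp: S_def)
    moreover have "closed {x. cinner e x = 0}" for e
      unfolding cinner_def by (intro closed_Collect_eq continuous_intros)
    ultimately show ?thesis
      by auto
  qed
  define K where "K = S \<inter> sphere 0 1"
  have "compact K"
    using \<open>closed S\<close> by (simp add: K_def closed_Int_compact)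
  obtain z where "z \<noteq> 0" and "z \<in> S"
    using orthogonal_complement_nonzero assms(2,3) unfolding S_def by blast
  then have "(1 / norm z) *\<^sub>R z \<in> S"
    using vec.subspace_scale[OF S] by (simp add: scaleR_eq_scale)
  with \<open>z \<noteq> 0\<close> have "(1 / norm z) *\<^sub>R z \<in> K"
    by (simp add: K_def)
  moreover have "continuous_on K (\<lambda>y. Re (cinner y (H *v y)))"
    unfolding cinner_def matrix_vector_mult_def by (intro continuous_intros)
  ultimately obtain x where "x \<in> K" and "\<forall>y\<in>K. Re (cinner y (H *v y)) \<le> Re (cinner x (H *v x))"
    using continuous_attains_sup[OF \<open>compact K\<close>] by blast
  then have "H *v x = cinner x (H *v x) *s x"
    using rayleigh_maximizer_eigenvector[OF herm S inv] by (simp add: K_def)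
  with \<open>x \<in> K\<close> show ?thesis
    using that by (auto simp: K_def S_def)
qed

lemma hermitian_orthonormal_eigenvectors:
  fixes H :: "complex^'n^'n"
  assumes herm: "hermitian_mat H" and "k \<le> CARD('n)"
  shows "\<exists>E. finite E \<and> card E = k \<and> (\<forall>e\<in>E. norm e = 1) \<and>
    (\<forall>e\<in>E. \<forall>f\<in>E. e \<noteq> f \<longrightarrow> cinner e f = 0) \<and> (\<forall>e\<in>E. \<exists>\<mu>. H *v e = \<mu> *s e)"
  using assms(2)
proof (induction k)
  case 0
  show ?case
    by (intro exI[of _ "{}"]) simp
next
  case (Suc k)
  then obtain E where E: "finite E" "card E = k" "\<forall>e\<in>E. norm e = 1"
    "\<forall>e\<in>E. \<forall>f\<in>E. e \<noteq> f \<longrightarrow> cinner e f = 0" "\<forall>e\<in>E. \<exists>\<mu>. H *v e = \<mu> *s e"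
    by auto
  obtain x \<mu> where x: "norm x = 1" "\<forall>e\<in>E. cinner e x = 0" "H *v x = \<mu> *s x"
    using hermitian_eigenvector_orthogonal[OF herm E(1) _ E(5)] E(2) Suc.prems by auto
  then have "x \<notin> E"
    using E(3) by (auto simp: cinner_self)
  with E x show ?case
    by (intro exI[of _ "insert x E"]) (auto simp: cinner_eq_0_commute)
qed

theorem hermitian_spectral:
  fixes H :: "complex^'n^'n"
  assumes herm: "hermitian_mat H"
  obtains U d where "unitary_mat U" and "H = U ** diag_mat d ** cadj U"
proof -
  obtain E where E: "finite E" "card E = CARD('n)" "\<forall>e\<in>E. norm e = 1"
    "\<forall>e\<in>E. \<forall>f\<in>E. e \<noteq> f \<longrightarrow> cinner e f = 0" "\<forall>e\<in>E. \<exists>\<mu>. H *v e = \<mu> *s e"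
    using hermitian_orthonormal_eigenvectors[OF herm order.refl] by auto
  obtain g where g: "bij_betw g (UNIV :: 'n set) E"
    using finite_same_card_bij[of "UNIV :: 'n set" E] E(1,2) by auto
  then have gE: "g i \<in> E" and g_inj: "g i = g j \<longleftrightarrow> i = j" for i j
    by (auto simp: bij_betw_def inj_eq)
  define U :: "complex^'n^'n" where "U = (\<chi> r i. g i $ r)"
  define d where "d i = Re (cinner (g i) (H *v g i))" for i
  have "unitary_mat U"
  proof -
    have "(cadj U ** U) $ i $ j = cinner (g i) (g j)" for i j
      by (simp add: U_def matrix_matrix_mult_def cinner_def)
    moreover have "cinner (g i) (g j) = (if i = j then 1 else 0)" for i j
      using E(3,4) gE g_inj by (simp add: cinner_self)
    ultimately show ?thesis
      by (simp add: unitary_mat_def vec_eq_iff mat_def)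
  qed
  have eig: "H *v g i = of_real (d i) *s g i" for i
  proof -
    obtain \<mu> where \<mu>: "H *v g i = \<mu> *s g i"
      using E(5) gE by blast
    then have "cinner (g i) (H *v g i) = \<mu>"
      using E(3) gE by (simp add: cinner_scale_right cinner_self)
    then have "\<mu> = of_real (d i)"
      using Im_cinner_hermitian[OF herm, of "g i"] by (simp add: d_def complex_eq_iff)
    with \<mu> show ?thesis
      by simp
  qed
  have "(H ** U) $ r $ i = (H *v g i) $ r" for r i
    by (simp add: U_def matrix_matrix_mult_def matrix_vector_mult_def)
  moreover have "(U ** diag_mat d) $ r $ i = of_real (d i) * g i $ r" for r i
    by (simp add: U_def matrix_mul_diag_mat_nth mult.commute)
  ultimately have "H ** U = U ** diag_mat d"
    using eig by (simp add: vec_eq_iff)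
  then have "H = U ** diag_mat d ** cadj U"
    using unitary_mat_right[OF \<open>unitary_mat U\<close>] by (metis matrix_mul_assoc matrix_mul_rid)
  with \<open>unitary_mat U\<close> show ?thesis
    using that by blast
qed

section \<open>Positive semidefinite matrices and the absolute value\<close>

lemma psd_mat_congruence:
  assumes "psd_mat P"
  shows "psd_mat (cadj X ** P ** X)"
  unfolding psd_mat_iff
proof
  show "hermitian_mat (cadj X ** P ** X)"
    using assms by (simp add: psd_mat_iff hermitian_mat_def cadj_mult matrix_mul_assoc)
  show "\<forall>x. 0 \<le> Re (cinner x ((cadj X ** P ** X) *v x))"
  proof
    fix x
    have "cinner x ((cadj X ** P ** X) *v x) = cinner (X *v x) (P *v (X *v x))"
      by (simp add: cinner_adjoint matrix_vector_mul_assoc[symmetric])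
    then show "0 \<le> Re (cinner x ((cadj X ** P ** X) *v x))"
      using assms by (simp add: psd_mat_iff)
  qed
qed

lemma psd_mat_diag_iff: "psd_mat (diag_mat d) \<longleftrightarrow> (\<forall>i. 0 \<le> d i)"
proof -
  have form: "cinner x (diag_mat d *v x) = of_real (\<Sum>i\<in>UNIV. d i * (cmod (x $ i))\<^sup>2)" for x
    by (simp add: cinner_def diag_mat_mult_vec_nth complex_norm_square mult_ac del: of_real_power)
  have "Re (cinner (axis i 1) (diag_mat d *v axis i 1)) = d i" for i
  proof -
    have "(\<Sum>j\<in>UNIV. d j * (cmod (axis i 1 $ j))\<^sup>2) = (\<Sum>j\<in>UNIV. if j = i then d j else 0)"
      by (intro sum.cong) (auto simp: axis_def)
    then show ?thesis
      by (simp add: form)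
  qed
  moreover have "0 \<le> Re (cinner x (diag_mat d *v x))" if "\<forall>i. 0 \<le> d i" for x
    using that by (simp add: form sum_nonneg)
  ultimately show ?thesis
    by (metis psd_mat_iff hermitian_mat_def cadj_diag_mat)
qed

lemma psd_mat_gram: "psd_mat (cadj A ** A)"
  by (simp add: psd_mat_iff hermitian_mat_def cadj_mult cinner_adjoint cinner_self
      matrix_vector_mul_assoc[symmetric])

lemma psd_spectral:
  assumes "psd_mat P"
  obtains U d where "unitary_mat U" and "\<forall>i. 0 \<le> d i" and "P = U ** diag_mat d ** cadj U"
proof -
  obtain U d where U: "unitary_mat U" and P: "P = U ** diag_mat d ** cadj U"
    using assms hermitian_spectral by (auto simp: psd_mat_iff)
  then have "cadj U ** P ** U = diag_mat d"
    by (simp add: unitary_mat_cancel_left unitary_matD matrix_mul_assoc[symmetric])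
  then have "\<forall>i. 0 \<le> d i"
    using psd_mat_congruence[OF assms, of U] by (simp add: psd_mat_diag_iff)
  with U P show ?thesis
    using that by blast
qed

lemma psd_sqrt_exists:
  assumes "psd_mat P"
  obtains R where "psd_mat R" and "R ** R = P"
proof -
  obtain U d where U: "unitary_mat U" and d: "\<forall>i. 0 \<le> d i" and P: "P = U ** diag_mat d ** cadj U"
    using psd_spectral[OF assms] .
  define R where "R = U ** diag_mat (\<lambda>i. sqrt (d i)) ** cadj U"
  have "psd_mat R"
    using psd_mat_congruence[of "diag_mat (\<lambda>i. sqrt (d i))" "cadj U"] d
    by (simp add: R_def psd_mat_diag_iff)
  moreover have "R ** R = P"
  proof -
    let ?S = "diag_mat (\<lambda>i. sqrt (d i))"
    have "R ** R = U ** (?S ** (cadj U ** U) ** ?S) ** cadj U"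
      by (simp add: R_def matrix_mul_assoc)
    then show ?thesis
      using U d by (simp add: P unitary_matD diag_mat_mult)
  qed
  ultimately show ?thesis
    using that by blast
qed

lemma Re_trace_psd_sandwich:
  assumes Q: "psd_mat Q" and D: "hermitian_mat D"
  shows "0 \<le> Re (trace (D ** Q ** D))"
    and "Re (trace (D ** Q ** D)) = 0 \<longleftrightarrow> Q ** D = 0"
proof -
  obtain S where S: "psd_mat S" "S ** S = Q"
    using psd_sqrt_exists[OF Q] .
  have "cadj S = S"
    using S(1) by (simp add: psd_mat_iff hermitian_mat_def)
  with D have gram: "D ** Q ** D = cadj (S ** D) ** (S ** D)"
    by (simp add: hermitian_mat_def cadj_mult matrix_mul_assoc flip: S(2))
  then show "0 \<le> Re (trace (D ** Q ** D))"
    by (simp add: Re_trace_gram_nonneg)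
  show "Re (trace (D ** Q ** D)) = 0 \<longleftrightarrow> Q ** D = 0"
  proof
    assume "Re (trace (D ** Q ** D)) = 0"
    then have "S ** D = 0"
      by (simp add: gram Re_trace_gram_eq_0_iff)
    then show "Q ** D = 0"
      by (metis S(2) matrix_mul_assoc matrix_mul_zero_right)
  next
    assume "Q ** D = 0"
    then show "Re (trace (D ** Q ** D)) = 0"
      by (simp add: matrix_mul_assoc[symmetric] trace_def)
  qed
qed

lemma psd_sqrt_unique:
  assumes P: "psd_mat P" and R: "psd_mat R" and eq: "P ** P = R ** R"
  shows "P = R"
proof -
  define D where "D = P - R"
  have D: "hermitian_mat D"
    using P R by (simp add: D_def psd_mat_iff hermitian_mat_def)
  have "P ** D + D ** R = 0"
    using eq by (simp add: D_def matrix_mul_diff_ldistrib matrix_mul_diff_rdistrib matrix_mul_assoc)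
  then have "trace (D ** (P ** D + D ** R)) = 0"
    by (simp add: trace_def)
  moreover have "trace (D ** D ** R) = trace (D ** R ** D)"
    by (metis matrix_mul_assoc trace_mul_sym)
  ultimately have "Re (trace (D ** P ** D)) + Re (trace (D ** R ** D)) = 0"
    by (simp add: matrix_add_ldistrib trace_add matrix_mul_assoc complex_eq_iff)
  then have "Re (trace (D ** P ** D)) = 0" and "Re (trace (D ** R ** D)) = 0"
    using Re_trace_psd_sandwich(1)[OF P D] Re_trace_psd_sandwich(1)[OF R D] by linarith+
  then have "P ** D = 0" and "R ** D = 0"
    using Re_trace_psd_sandwich(2) P R D by blast+
  then have "cadj D ** D = 0"
    using D by (simp add: hermitian_mat_def D_def matrix_mul_diff_rdistrib)
  then have "D = 0"
    using Re_trace_gram_eq_0_iff[of D] by (simp add: trace_def)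
  then show ?thesis
    by (simp add: D_def)
qed

lemma mabs_spec: "psd_mat (mabs A) \<and> mabs A ** mabs A = cadj A ** A"
proof -
  have "\<exists>!P. psd_mat P \<and> P ** P = cadj A ** A"
    using psd_sqrt_exists[OF psd_mat_gram] psd_sqrt_unique by metis
  then show ?thesis
    unfolding mabs_def by (rule theI')
qed

lemma psd_mat_mabs: "psd_mat (mabs A)"
  using mabs_spec by blast

lemma mabs_mult_self: "mabs A ** mabs A = cadj A ** A"
  using mabs_spec by blast

lemma cadj_mabs [simp]: "cadj (mabs A) = mabs A"
  using psd_mat_mabs[of A] by (simp add: psd_mat_iff hermitian_mat_def)

section \<open>The trace inequality\<close>

lemma bessel_inequality:
  fixes X Y :: "complex^'n^'n"
  assumes Y: "cadj Y ** Y = diag_mat e"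
  shows "(\<Sum>j\<in>UNIV. (cmod ((cadj X ** Y) $ i $ j))\<^sup>2 / e j) \<le> (\<Sum>k\<in>UNIV. (cmod (X $ k $ i))\<^sup>2)"
proof -
  \<comment> \<open>A column of \<open>Y\<close> with \<open>e j = 0\<close> vanishes, so the junk value \<open>1 / 0 = 0\<close>
      is harmless.\<close>
  define F where "F = diag_mat (\<lambda>j. 1 / e j)"
  define G where "G = cadj X ** Y"
  \<comment> \<open>\<open>K\<close> is the orthogonal projection onto the column space of \<open>Y\<close>.\<close>
  define K where "K = Y ** F ** cadj Y"
  define N where "N = mat 1 - K"
  have "F ** diag_mat e ** F = F"
    by (auto simp: F_def diag_mat_mult intro!: arg_cong[where f = diag_mat])
  then have "K ** K = K"
    by (metis K_def Y matrix_mul_assoc)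
  moreover have "cadj K = K"
    by (simp add: K_def F_def cadj_mult matrix_mul_assoc)
  ultimately have "cadj N ** N = N"
    by (simp add: N_def matrix_mul_diff_ldistrib matrix_mul_diff_rdistrib)
  have "cadj (N ** X) ** (N ** X) = cadj X ** (cadj N ** N) ** X"
    by (simp add: cadj_mult matrix_mul_assoc)
  also have "\<dots> = cadj X ** N ** X"
    by (simp only: \<open>cadj N ** N = N\<close>)
  also have "\<dots> = cadj X ** X - G ** F ** cadj G"
    by (simp add: N_def K_def G_def cadj_mult matrix_mul_diff_ldistrib matrix_mul_diff_rdistrib
        matrix_mul_assoc)
  finally have "(cadj X ** X) $ i $ i - (G ** F ** cadj G) $ i $ i
      = of_real (\<Sum>k\<in>UNIV. (cmod ((N ** X) $ k $ i))\<^sup>2)"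
    by (metis gram_diag_nth vector_minus_component)
  then have "Re ((G ** F ** cadj G) $ i $ i) \<le> Re ((cadj X ** X) $ i $ i)"
    using sum_nonneg[of UNIV "\<lambda>k. (cmod ((N ** X) $ k $ i))\<^sup>2"]
    by (metis Re_complex_of_real diff_ge_0_iff_ge minus_complex.sel(1) zero_le_power2)
  moreover have "(G ** F ** cadj G) $ i $ i = of_real (\<Sum>j\<in>UNIV. (cmod (G $ i $ j))\<^sup>2 / e j)"
    unfolding matrix_matrix_mult_def[of "G ** F" "cadj G"] vec_lambda_beta
    by (simp add: F_def matrix_mul_diag_mat_nth complex_norm_square del: of_real_power)
  ultimately show ?thesis
    by (simp add: G_def gram_diag_nth)
qed

lemma cross_term_le:
  fixes b g w d e :: real
  assumes "0 < b" "0 \<le> d" "0 \<le> e" and "d = 0 \<or> e = 0 \<longrightarrow> g = 0"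
  shows "g * w \<le> b * (d * e * w\<^sup>2) + (g\<^sup>2 / d\<^sup>2 + g\<^sup>2 / e\<^sup>2) / (8 * b)"
proof (cases "g = 0")
  case True
  then show ?thesis
    using assms by simp
next
  case False
  with assms have "0 < d" "0 < e"
    by auto
  have "g * w \<le> b * (d * e * w\<^sup>2) + g\<^sup>2 / (4 * b * d * e)"
  proof -
    have "0 \<le> (2 * b * d * e * w - g)\<^sup>2"
      by simp
    then have "4 * b * d * e * (g * w) \<le> 4 * b * d * e * (b * (d * e * w\<^sup>2)) + g\<^sup>2"
      by (simp add: power2_eq_square algebra_simps)
    then show ?thesis
      using \<open>0 < b\<close> \<open>0 < d\<close> \<open>0 < e\<close> by (simp add: field_simps)
  qed
  also have "g\<^sup>2 / (4 * b * d * e) \<le> (g\<^sup>2 / d\<^sup>2 + g\<^sup>2 / e\<^sup>2) / (8 * b)"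
  proof -
    have "0 \<le> g\<^sup>2 * (1 / d - 1 / e)\<^sup>2"
      by simp
    then show ?thesis
      using \<open>0 < b\<close> \<open>0 < d\<close> \<open>0 < e\<close> by (simp add: field_simps power2_eq_square)
  qed
  finally show ?thesis
    by simp
qed

lemma column_norm_if_gram_eq_diag:
  assumes "cadj X ** X = diag_mat f"
  shows "(\<Sum>k\<in>UNIV. (cmod (X $ k $ i))\<^sup>2) = f i"
  using gram_diag_nth[of X i] by (simp add: assms diag_mat_nth del: of_real_sum of_real_power)

lemma Re_trace_diag_sandwich:
  "Re (trace (diag_mat d ** cadj W ** diag_mat e ** W)) =
    (\<Sum>i\<in>UNIV. \<Sum>j\<in>UNIV. d i * e j * (cmod (W $ j $ i))\<^sup>2)"
proof -
  have "(diag_mat d ** cadj W ** diag_mat e ** W) $ i $ i =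
      of_real (\<Sum>j\<in>UNIV. d i * e j * (cmod (W $ j $ i))\<^sup>2)" for i
    unfolding matrix_matrix_mult_def[of "diag_mat d ** cadj W ** diag_mat e" W] vec_lambda_beta
    by (simp add: matrix_mul_diag_mat_nth diag_mat_mul_nth of_real_sum complex_norm_square mult_ac
        del: of_real_power)
  then show ?thesis
    by (simp add: trace_def)
qed

lemma Re_trace_orthogonal_columns_le:
  fixes X Y W :: "complex^'n^'n" and d e :: "'n \<Rightarrow> real"
  assumes b: "0 < b" and d: "\<forall>i. 0 \<le> d i" and e: "\<forall>j. 0 \<le> e j"
    and X: "cadj X ** X = diag_mat (\<lambda>i. (d i)\<^sup>2)" and Y: "cadj Y ** Y = diag_mat (\<lambda>j. (e j)\<^sup>2)"
  shows "Re (trace (cadj X ** Y ** W)) \<le> ((\<Sum>i\<in>UNIV. (d i)\<^sup>2) + (\<Sum>j\<in>UNIV. (e j)\<^sup>2)) / (8 * b)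
    + b * Re (trace (diag_mat d ** cadj W ** diag_mat e ** W))"
proof -
  define G where "G = cadj X ** Y"
  define g where "g i j = cmod (G $ i $ j)" for i j
  have G_zero: "G $ i $ j = 0" if "d i = 0 \<or> e j = 0" for i j
  proof -
    have "X $ k $ i = 0 \<or> Y $ k $ j = 0" for k
      using that column_norm_if_gram_eq_diag[OF X, of i] column_norm_if_gram_eq_diag[OF Y, of j]
      by (auto simp: sum_nonneg_eq_0_iff)
    then show ?thesis
      unfolding G_def matrix_matrix_mult_def by (auto intro!: sum.neutral)
  qed
  have rows: "(\<Sum>j\<in>UNIV. (g i j)\<^sup>2 / (e j)\<^sup>2) \<le> (d i)\<^sup>2" for i
    using bessel_inequality[OF Y, of X i] by (simp add: g_def G_def column_norm_if_gram_eq_diag[OF X])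
  have cols: "(\<Sum>i\<in>UNIV. (g i j)\<^sup>2 / (d i)\<^sup>2) \<le> (e j)\<^sup>2" for j
  proof -
    have "cadj Y ** X = cadj G"
      by (simp add: G_def cadj_mult)
    then show ?thesis
      using bessel_inequality[OF X, of Y j] by (simp add: g_def column_norm_if_gram_eq_diag[OF Y])
  qed
  have "(\<Sum>i\<in>UNIV. \<Sum>j\<in>UNIV. (g i j)\<^sup>2 / (d i)\<^sup>2) \<le> (\<Sum>j\<in>UNIV. (e j)\<^sup>2)"
    using cols by (subst sum.swap) (intro sum_mono)
  moreover have "(\<Sum>i\<in>UNIV. \<Sum>j\<in>UNIV. (g i j)\<^sup>2 / (e j)\<^sup>2) \<le> (\<Sum>i\<in>UNIV. (d i)\<^sup>2)"
    using rows by (intro sum_mono)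
  ultimately have bessel_sums: "((\<Sum>i\<in>UNIV. \<Sum>j\<in>UNIV. (g i j)\<^sup>2 / (d i)\<^sup>2)
      + (\<Sum>i\<in>UNIV. \<Sum>j\<in>UNIV. (g i j)\<^sup>2 / (e j)\<^sup>2)) / (8 * b)
      \<le> ((\<Sum>i\<in>UNIV. (d i)\<^sup>2) + (\<Sum>j\<in>UNIV. (e j)\<^sup>2)) / (8 * b)"
    using b by (intro divide_right_mono) auto
  have "Re (trace (cadj X ** Y ** W)) = (\<Sum>i\<in>UNIV. \<Sum>j\<in>UNIV. Re (G $ i $ j * W $ j $ i))"
    by (simp add: G_def trace_def matrix_matrix_mult_def[of "cadj X ** Y"] Re_sum)
  also have "\<dots> \<le> (\<Sum>i\<in>UNIV. \<Sum>j\<in>UNIV. b * (d i * e j * (cmod (W $ j $ i))\<^sup>2)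
      + ((g i j)\<^sup>2 / (d i)\<^sup>2 + (g i j)\<^sup>2 / (e j)\<^sup>2) / (8 * b))"
  proof (intro sum_mono)
    fix i j
    have "Re (G $ i $ j * W $ j $ i) \<le> g i j * cmod (W $ j $ i)"
      by (metis complex_Re_le_cmod g_def norm_mult)
    also have "\<dots> \<le> b * (d i * e j * (cmod (W $ j $ i))\<^sup>2)
        + ((g i j)\<^sup>2 / (d i)\<^sup>2 + (g i j)\<^sup>2 / (e j)\<^sup>2) / (8 * b)"
      using b d e G_zero by (intro cross_term_le) (auto simp: g_def)
    finally show "Re (G $ i $ j * W $ j $ i) \<le> \<dots>" .
  qed
  also have "\<dots> = ((\<Sum>i\<in>UNIV. \<Sum>j\<in>UNIV. (g i j)\<^sup>2 / (d i)\<^sup>2)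
      + (\<Sum>i\<in>UNIV. \<Sum>j\<in>UNIV. (g i j)\<^sup>2 / (e j)\<^sup>2)) / (8 * b)
      + b * (\<Sum>i\<in>UNIV. \<Sum>j\<in>UNIV. d i * e j * (cmod (W $ j $ i))\<^sup>2)"
    by (simp add: sum.distrib sum_distrib_left sum_divide_distrib add_divide_distrib)
  also have "\<dots> \<le> ((\<Sum>i\<in>UNIV. (d i)\<^sup>2) + (\<Sum>j\<in>UNIV. (e j)\<^sup>2)) / (8 * b)
      + b * Re (trace (diag_mat d ** cadj W ** diag_mat e ** W))"
    using bessel_sums by (simp add: Re_trace_diag_sandwich)
  finally show ?thesis .
qed

lemma mabs_spectral:
  obtains U d where "unitary_mat U" and "\<forall>i. 0 \<le> d i" and "mabs A = U ** diag_mat d ** cadj U"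
    and "cadj (A ** U) ** (A ** U) = diag_mat (\<lambda>i. (d i)\<^sup>2)"
proof -
  obtain U d where U: "unitary_mat U" and d: "\<forall>i. 0 \<le> d i" and P: "mabs A = U ** diag_mat d ** cadj U"
    using psd_spectral[OF psd_mat_mabs] .
  have "cadj (A ** U) ** (A ** U) = cadj U ** (mabs A ** mabs A) ** U"
    by (simp add: mabs_mult_self cadj_mult matrix_mul_assoc)
  also have "\<dots> = (cadj U ** U) ** diag_mat d ** (cadj U ** U) ** diag_mat d ** (cadj U ** U)"
    by (simp add: P matrix_mul_assoc)
  also have "\<dots> = diag_mat (\<lambda>i. (d i)\<^sup>2)"
    using U by (simp add: unitary_matD diag_mat_mult power2_eq_square)
  finally show ?thesis
    using that U d P by blast
qed

lemma frob_norm_nonneg: "0 \<le> frob_norm X"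
  by (simp add: frob_norm_def Re_trace_gram_nonneg)

lemma frob_norm_square: "(frob_norm X)\<^sup>2 = Re (trace (cadj X ** X))"
  by (simp add: frob_norm_def Re_trace_gram_nonneg)

lemma frob_norm_add_square:
  "(frob_norm (X + Y))\<^sup>2 = (frob_norm X)\<^sup>2 + (frob_norm Y)\<^sup>2 + 2 * Re (trace (cadj X ** Y))"
proof -
  have "cadj (X + Y) ** (X + Y) = cadj X ** X + cadj Y ** Y + (cadj X ** Y + cadj Y ** X)"
    by (simp add: matrix_add_ldistrib matrix_mul_add_rdistrib)
  then show ?thesis
    by (simp add: frob_norm_square trace_add trace_cadj_mult_swap[of X Y])
qed

lemma frob_norm_mabs [simp]: "frob_norm (mabs A) = frob_norm A"
  by (simp add: frob_norm_def mabs_mult_self)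

lemma trace_gram_mult_unitary:
  assumes "unitary_mat U"
  shows "trace (cadj (A ** U) ** (A ** U)) = trace (cadj A ** A)"
  using trace_unitary_conj[OF assms, of "cadj A ** A"] by (simp add: cadj_mult matrix_mul_assoc)

lemma Re_trace_cadj_mult_le:
  fixes A B :: "complex^'n^'n"
  assumes "0 < b"
  shows "Re (trace (cadj A ** B)) \<le> ((frob_norm A)\<^sup>2 + (frob_norm B)\<^sup>2) / (8 * b)
    + b * Re (trace (mabs A ** mabs B))"
proof -
  obtain U d where U: "unitary_mat U" and d: "\<forall>i. 0 \<le> d i"
    and P: "mabs A = U ** diag_mat d ** cadj U" and X: "cadj (A ** U) ** (A ** U) = diag_mat (\<lambda>i. (d i)\<^sup>2)"
    using mabs_spectral .
  obtain V e where V: "unitary_mat V" and e: "\<forall>i. 0 \<le> e i"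
    and Q: "mabs B = V ** diag_mat e ** cadj V" and Y: "cadj (B ** V) ** (B ** V) = diag_mat (\<lambda>i. (e i)\<^sup>2)"
    using mabs_spectral .
  define W where "W = cadj V ** U"
  have "cadj (A ** U) ** (B ** V) ** W = cadj U ** (cadj A ** B) ** (V ** cadj V) ** U"
    by (simp add: W_def cadj_mult matrix_mul_assoc)
  then have "trace (cadj (A ** U) ** (B ** V) ** W) = trace (cadj A ** B)"
    by (simp add: unitary_mat_right[OF V] trace_unitary_conj[OF U])
  moreover have "trace (diag_mat d ** cadj W ** diag_mat e ** W) = trace (mabs A ** mabs B)"
    using trace_mul_sym[of U "diag_mat d ** cadj U ** mabs B"]
    by (simp add: W_def P Q cadj_mult matrix_mul_assoc)
  moreover have "(\<Sum>i\<in>UNIV. (d i)\<^sup>2) = (frob_norm A)\<^sup>2"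
    by (metis X trace_gram_mult_unitary[OF U] Re_trace_diag_mat frob_norm_square)
  moreover have "(\<Sum>i\<in>UNIV. (e i)\<^sup>2) = (frob_norm B)\<^sup>2"
    by (metis Y trace_gram_mult_unitary[OF V] Re_trace_diag_mat frob_norm_square)
  ultimately show ?thesis
    using Re_trace_orthogonal_columns_le[OF assms d e X Y, of W] by simp
qed

theorem mainTheorem1:
  fixes A B :: "complex^'n^'n"
  shows "frob_norm (A + B) \<le> sqrt ((1 + sqrt 2) / 2) * frob_norm (mabs A + mabs B)"
proof -
  define c :: real where "c = (1 + sqrt 2) / 2"
  have "0 < 1 + sqrt 2" and "(1 + sqrt 2) * (1 + sqrt 2) = 2 * (1 + sqrt 2) + 1"
    by (simp_all add: algebra_simps add_pos_nonneg)
  then have "0 < c" and c: "1 + 1 / (4 * c) = c"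
    by (simp_all add: c_def field_simps)
  let ?a = "(frob_norm A)\<^sup>2 + (frob_norm B)\<^sup>2"
  let ?t = "Re (trace (mabs A ** mabs B))"
  have "(frob_norm (A + B))\<^sup>2 = ?a + 2 * Re (trace (cadj A ** B))"
    by (rule frob_norm_add_square)
  also have "\<dots> \<le> ?a + 2 * (?a / (8 * c) + c * ?t)"
    by (intro add_left_mono mult_left_mono Re_trace_cadj_mult_le \<open>0 < c\<close>) simp
  also have "\<dots> = (1 + 1 / (4 * c)) * ?a + 2 * c * ?t"
    using \<open>0 < c\<close> by (simp add: field_simps)
  also have "\<dots> = c * (frob_norm (mabs A + mabs B))\<^sup>2"
    unfolding c by (simp add: frob_norm_add_square algebra_simps)
  finally have "(frob_norm (A + B))\<^sup>2 \<le> (sqrt c * frob_norm (mabs A + mabs B))\<^sup>2"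
    using \<open>0 < c\<close> by (simp add: power_mult_distrib)
  then show ?thesis
    unfolding c_def[symmetric] by (rule power2_le_imp_le)
      (use \<open>0 < c\<close> in \<open>simp add: frob_norm_nonneg zero_le_mult_iff\<close>)
qed

end
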